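(* For every formula $\phi\in\mathbf{Fm}$, the maps $[\![\phi]\!]:\mathsf{F}_{\mathbf{A}}(\mathbf{Fm})\to\mathbf{A}$ and $(\![\phi]\!):\mathsf{I}_{\mathbf{A}}(\mathbf{Fm})\to\mathbf{A}$ coincide with the maps $f\mapsto f(\phi)$ and $i\mapsto i(\phi)$, respectively.
   Context: Let $\mathbf{A}$ be a complete, frame-distributive and dually frame-distributive, commutative and associative residuated lattice with $1\to\alpha=\alpha$. Let $\mathbf{Fm}$ be the Lindenbaum–Tarski algebra of the basic normal non-distributive modal logic $\mathbf{L}$ over the language $\bot,\top,p,\wedge,\vee,\Box,\Diamond$. Let $\mathsf{F}_{\mathbf{A}}(\mathbf{Fm})$ (resp. $\mathsf{I}_{\mathbf{A}}(\mathbf{Fm})$) be the proper $\mathbf{A}$-filters $f$ ($f(\top)=1,f(\bot)=0$, $\wedge$-preserving) (resp. proper $\mathbf{A}$-ideals $i$: $i(\bot)=1,i(\top)=0$, $i(a\vee b)=i(a)\wedge i(b)$). Canonical model: $I(f,i)=\bigvee_\phi(f(\phi)\otimes i(\phi))$, $R_\Diamond(i,f)=\bigvee_\phi(f(\phi)\otimes i(\Diamond\phi))$, $R_\Box(f,i)=\bigvee_\phi(f(\Box\phi)\otimes i(\phi))$, $g^\uparrow(i)=\bigwedge_f(g(f)\to I(f,i))$, $u^\downarrow(f)=\bigwedge_i(u(i)\to I(f,i))$, and $V(p)=([\![p]\!],(\![p]\!))$ with $[\![p]\!](f)=f(p)$, $(\![p]\!)(i)=i(p)$. $V$ is extended to all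 formulas (writing $V(\phi)=([\![\phi]\!],(\![\phi]\!))$, extension and intension) by: $V(\top)=(\top^{\mathbf{A}^A},(\top^{\mathbf{A}^A})^\uparrow)$, $V(\bot)=((\top^{\mathbf{A}^X})^\downarrow,\top^{\mathbf{A}^X})$, $V(\phi\wedge\psi)=([\![\phi]\!]\wedge[\![\psi]\!],([\![\phi]\!]\wedge[\![\psi]\!])^\uparrow)$, $V(\phi\vee\psi)=(((\![\phi]\!)\wedge(\![\psi]\!))^\downarrow,(\![\phi]\!)\wedge(\![\psi]\!))$, $V(\Box\phi)=(R_\Box^{(0)}[(\![\phi]\!)],(R_\Box^{(0)}[(\![\phi]\!)])^\uparrow)$ with $R_\Box^{(0)}[u](f)=\bigwedge_i(u(i)\to R_\Box(f,i))$, and $V(\Diamond\phi)=((R_\Diamond^{(0)}[[\![\phi]\!]])^\downarrow,R_\Diamond^{(0)}[[\![\phi]\!]])$ with $R_\Diamond^{(0)}[g](i)=\bigwedge_f(g(f)\to R_\Diamond(i,f))$. *)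

theory Defs
  imports Main
begin

definition cfd_res_lattice :: "('a::complete_lattice \<Rightarrow> 'a \<Rightarrow> 'a) \<Rightarrow> ('a \<Rightarrow> 'a \<Rightarrow> 'a) \<Rightarrow> bool" where
  "cfd_res_lattice tens imp \<longleftrightarrow>
     (\<forall>a b. tens a b = tens b a) \<and>
     (\<forall>a b c. tens (tens a b) c = tens a (tens b c)) \<and>
     (\<forall>a b c. tens a b \<le> c \<longleftrightarrow> b \<le> imp a c) \<and>
     (\<forall>a. imp top a = a) \<and>
     (\<forall>(a::'a) B. inf a (Sup B) = (SUP b\<in>B. inf a b)) \<and>
     (\<forall>(a::'a) B. sup a (Inf B) = (INF b\<in>B. sup a b))"

datatype 'v fm = FBot | FTop | Var 'v | FAnd "'v fm" "'v fm" | FOr "'v fm" "'v fm"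
  | FBox "'v fm" | FDia "'v fm"

inductive derives :: "'v fm \<Rightarrow> 'v fm \<Rightarrow> bool" where
  refl: "derives \<phi> \<phi>"
| bot: "derives FBot \<phi>"
| top: "derives \<phi> FTop"
| orI1: "derives \<phi> (FOr \<phi> \<psi>)"
| orI2: "derives \<psi> (FOr \<phi> \<psi>)"
| andE1: "derives (FAnd \<phi> \<psi>) \<phi>"
| andE2: "derives (FAnd \<phi> \<psi>) \<psi>"
| boxTop: "derives FTop (FBox FTop)"
| diaBot: "derives (FDia FBot) FBot"
| boxAnd: "derives (FAnd (FBox \<phi>) (FBox \<psi>)) (FBox (FAnd \<phi> \<psi>))"
| diaOr: "derives (FDia (FOr \<phi> \<psi>)) (FOr (FDia \<phi>) (FDia \<psi>))"
| cut: "derives \<phi> \<chi> \<Longrightarrow> derives \<chi> \<psi> \<Longrightarrow> derives \<phi> \<psi>"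
| orE: "derives \<phi> \<chi> \<Longrightarrow> derives \<psi> \<chi> \<Longrightarrow> derives (FOr \<phi> \<psi>) \<chi>"
| andI: "derives \<chi> \<phi> \<Longrightarrow> derives \<chi> \<psi> \<Longrightarrow> derives \<chi> (FAnd \<phi> \<psi>)"
| boxMono: "derives \<phi> \<psi> \<Longrightarrow> derives (FBox \<phi>) (FBox \<psi>)"
| diaMono: "derives \<phi> \<psi> \<Longrightarrow> derives (FDia \<phi>) (FDia \<psi>)"

text \<open>Provable equivalence; the Lindenbaum--Tarski algebra Fm is the quotient of
  formulas by it. Maps out of Fm are represented as maps on formulas that are
  invariant under provable equivalence.\<close>

definition equiv_fm :: "'v fm \<Rightarrow> 'v fm \<Rightarrow> bool" where
  "equiv_fm \<phi> \<psi> \<longleftrightarrow> derives \<phi> \<psi> \<and> derives \<psi> \<phi>"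

definition on_Fm :: "('v fm \<Rightarrow> 'a) \<Rightarrow> bool" where
  "on_Fm h \<longleftrightarrow> (\<forall>\<phi> \<psi>. equiv_fm \<phi> \<psi> \<longrightarrow> h \<phi> = h \<psi>)"

definition A_filters :: "('v fm \<Rightarrow> 'a::complete_lattice) set" where
  "A_filters = {f. on_Fm f \<and> f FTop = top \<and> f FBot = bot \<and>
                   (\<forall>\<phi> \<psi>. f (FAnd \<phi> \<psi>) = inf (f \<phi>) (f \<psi>))}"

definition A_ideals :: "('v fm \<Rightarrow> 'a::complete_lattice) set" where
  "A_ideals = {i. on_Fm i \<and> i FBot = top \<and> i FTop = bot \<and>
                   (\<forall>\<phi> \<psi>. i (FOr \<phi> \<psi>) = inf (i \<phi>) (i \<psi>))}"

definition IncI :: "('a::complete_lattice \<Rightarrow> 'a \<Rightarrow> 'a) \<Rightarrow> ('v fm \<Rightarrow> 'a) \<Rightarrow> ('v fm \<Rightarrow> 'a) \<Rightarrow> 'a" where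
  "IncI tens f i = (SUP \<phi>. tens (f \<phi>) (i \<phi>))"

definition RDia :: "('a::complete_lattice \<Rightarrow> 'a \<Rightarrow> 'a) \<Rightarrow> ('v fm \<Rightarrow> 'a) \<Rightarrow> ('v fm \<Rightarrow> 'a) \<Rightarrow> 'a" where
  "RDia tens i f = (SUP \<phi>. tens (f \<phi>) (i (FDia \<phi>)))"

definition RBox :: "('a::complete_lattice \<Rightarrow> 'a \<Rightarrow> 'a) \<Rightarrow> ('v fm \<Rightarrow> 'a) \<Rightarrow> ('v fm \<Rightarrow> 'a) \<Rightarrow> 'a" where
  "RBox tens f i = (SUP \<phi>. tens (f (FBox \<phi>)) (i \<phi>))"

definition up :: "('a::complete_lattice \<Rightarrow> 'a \<Rightarrow> 'a) \<Rightarrow> ('a \<Rightarrow> 'a \<Rightarrow> 'a)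
    \<Rightarrow> (('v fm \<Rightarrow> 'a) \<Rightarrow> 'a) \<Rightarrow> ('v fm \<Rightarrow> 'a) \<Rightarrow> 'a" where
  "up tens imp g i = (INF f\<in>A_filters. imp (g f) (IncI tens f i))"

definition down :: "('a::complete_lattice \<Rightarrow> 'a \<Rightarrow> 'a) \<Rightarrow> ('a \<Rightarrow> 'a \<Rightarrow> 'a)
    \<Rightarrow> (('v fm \<Rightarrow> 'a) \<Rightarrow> 'a) \<Rightarrow> ('v fm \<Rightarrow> 'a) \<Rightarrow> 'a" where
  "down tens imp u f = (INF i\<in>A_ideals. imp (u i) (IncI tens f i))"

definition RBox0 :: "('a::complete_lattice \<Rightarrow> 'a \<Rightarrow> 'a) \<Rightarrow> ('a \<Rightarrow> 'a \<Rightarrow> 'a)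
    \<Rightarrow> (('v fm \<Rightarrow> 'a) \<Rightarrow> 'a) \<Rightarrow> ('v fm \<Rightarrow> 'a) \<Rightarrow> 'a" where
  "RBox0 tens imp u f = (INF i\<in>A_ideals. imp (u i) (RBox tens f i))"

definition RDia0 :: "('a::complete_lattice \<Rightarrow> 'a \<Rightarrow> 'a) \<Rightarrow> ('a \<Rightarrow> 'a \<Rightarrow> 'a)
    \<Rightarrow> (('v fm \<Rightarrow> 'a) \<Rightarrow> 'a) \<Rightarrow> ('v fm \<Rightarrow> 'a) \<Rightarrow> 'a" where
  "RDia0 tens imp g i = (INF f\<in>A_filters. imp (g f) (RDia tens i f))"

text \<open>The valuation V, extended to all formulas: V phi = (extension, intension).\<close>

fun V :: "('a::complete_lattice \<Rightarrow> 'a \<Rightarrow> 'a) \<Rightarrow> ('a \<Rightarrow> 'a \<Rightarrow> 'a) \<Rightarrow> 'v fm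
    \<Rightarrow> ((('v fm \<Rightarrow> 'a) \<Rightarrow> 'a) \<times> (('v fm \<Rightarrow> 'a) \<Rightarrow> 'a))" where
  "V tens imp (Var p) = ((\<lambda>f. f (Var p)), (\<lambda>i. i (Var p)))"
| "V tens imp FTop = ((\<lambda>f. top), up tens imp (\<lambda>f. top))"
| "V tens imp FBot = (down tens imp (\<lambda>i. top), (\<lambda>i. top))"
| "V tens imp (FAnd \<phi> \<psi>) =
     (let g = (\<lambda>f. inf (fst (V tens imp \<phi>) f) (fst (V tens imp \<psi>) f)) in (g, up tens imp g))"
| "V tens imp (FOr \<phi> \<psi>) =
     (let u = (\<lambda>i. inf (snd (V tens imp \<phi>) i) (snd (V tens imp \<psi>) i)) in (down tens imp u, u))"
| "V tens imp (FBox \<phi>) =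
     (let g = RBox0 tens imp (snd (V tens imp \<phi>)) in (g, up tens imp g))"
| "V tens imp (FDia \<phi>) =
     (let u = RDia0 tens imp (fst (V tens imp \<phi>)) in (down tens imp u, u))"

end

theory Submission
  imports Defs
begin

text \<open>The operators up, down, RBox0 and RDia0 of the canonical model are infima
  of residuals over all proper filters or ideals. Fed with the evaluation map at a
  formula \<psi>, residuation bounds such an infimum from below by the evaluation at
  \<psi> (or at Box \<psi>, Dia \<psi>), and the single term belonging to the principal ideal or
  filter generated by \<psi> bounds it from above; that principal ideal or filter is
  proper unless the value is already top.\<close>

lemma FOr_derives_iff: "derives (FOr \<phi> \<psi>) \<chi> \<longleftrightarrow> derives \<phi> \<chi> \<and> derives \<psi> \<chi>"
  by (meson derives.cut derives.orE derives.orI1 derives.orI2)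

lemma derives_FAnd_iff: "derives \<chi> (FAnd \<phi> \<psi>) \<longleftrightarrow> derives \<chi> \<phi> \<and> derives \<chi> \<psi>"
  by (meson derives.cut derives.andI derives.andE1 derives.andE2)

lemma A_filters_FTop: "f \<in> A_filters \<Longrightarrow> f FTop = top"
  and A_filters_FAnd: "f \<in> A_filters \<Longrightarrow> f (FAnd \<phi> \<psi>) = inf (f \<phi>) (f \<psi>)"
  and A_ideals_FBot: "i \<in> A_ideals \<Longrightarrow> i FBot = top"
  and A_ideals_FOr: "i \<in> A_ideals \<Longrightarrow> i (FOr \<phi> \<psi>) = inf (i \<phi>) (i \<psi>)"
  unfolding A_filters_def A_ideals_def by blast+

lemma A_filters_mono:
  assumes f: "f \<in> A_filters" and "derives \<phi> \<psi>"
  shows "f \<phi> \<le> f \<psi>"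
proof -
  have "equiv_fm \<phi> (FAnd \<phi> \<psi>)"
    unfolding equiv_fm_def using \<open>derives \<phi> \<psi>\<close> by (simp add: derives_FAnd_iff derives.refl derives.andE1)
  then have "f \<phi> = f (FAnd \<phi> \<psi>)"
    using f unfolding A_filters_def on_Fm_def by blast
  also have "\<dots> = inf (f \<phi>) (f \<psi>)"
    using f by (rule A_filters_FAnd)
  finally show ?thesis
    by (metis inf.orderI)
qed

lemma A_ideals_antimono:
  assumes i: "i \<in> A_ideals" and "derives \<phi> \<psi>"
  shows "i \<psi> \<le> i \<phi>"
proof -
  have "equiv_fm \<psi> (FOr \<phi> \<psi>)"
    unfolding equiv_fm_def using \<open>derives \<phi> \<psi>\<close> by (simp add: FOr_derives_iff derives.refl derives.orI2)
  then have "i \<psi> = i (FOr \<phi> \<psi>)"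
    using i unfolding A_ideals_def on_Fm_def by blast
  also have "\<dots> = inf (i \<phi>) (i \<psi>)"
    using i by (rule A_ideals_FOr)
  finally show ?thesis
    by (metis inf.orderI inf_commute)
qed

lemma A_filters_eq_topI: "f \<in> A_filters \<Longrightarrow> derives FTop \<phi> \<Longrightarrow> f \<phi> = top"
  using A_filters_mono[of f FTop \<phi>] by (simp add: A_filters_FTop top_unique)

lemma A_ideals_eq_topI: "i \<in> A_ideals \<Longrightarrow> derives \<phi> FBot \<Longrightarrow> i \<phi> = top"
  using A_ideals_antimono[of i \<phi> FBot] by (simp add: A_ideals_FBot top_unique)

definition principal_ideal :: "'v fm \<Rightarrow> 'v fm \<Rightarrow> 'a::complete_lattice" where
  "principal_ideal \<psi> = (\<lambda>\<chi>. if derives \<chi> \<psi> then top else bot)"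

definition principal_filter :: "'v fm \<Rightarrow> 'v fm \<Rightarrow> 'a::complete_lattice" where
  "principal_filter \<psi> = (\<lambda>\<chi>. if derives \<psi> \<chi> then top else bot)"

lemma principal_ideal_in_A_ideals: "\<not> derives FTop \<psi> \<Longrightarrow> principal_ideal \<psi> \<in> A_ideals"
  unfolding A_ideals_def principal_ideal_def on_Fm_def equiv_fm_def
  by (auto simp: FOr_derives_iff derives.bot) (meson derives.cut)+

lemma principal_filter_in_A_filters: "\<not> derives \<psi> FBot \<Longrightarrow> principal_filter \<psi> \<in> A_filters"
  unfolding A_filters_def principal_filter_def on_Fm_def equiv_fm_def
  by (auto simp: derives_FAnd_iff derives.top) (meson derives.cut)+

context
  fixes tens imp :: "'a::complete_lattice \<Rightarrow> 'a \<Rightarrow> 'a"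
  assumes cfd: "cfd_res_lattice tens imp"
begin

lemma tens_commute: "tens a b = tens b a"
  using cfd unfolding cfd_res_lattice_def by blast

lemma tens_le_iff_le_imp: "tens a b \<le> c \<longleftrightarrow> b \<le> imp a c"
  using cfd unfolding cfd_res_lattice_def by blast

lemma imp_top_left: "imp top a = a"
  using cfd unfolding cfd_res_lattice_def by blast

lemma tens_top_left: "tens top b = b"
  using tens_le_iff_le_imp[of top b] imp_top_left by (metis order.antisym order.refl)

lemma tens_top_right: "tens b top = b"
  using tens_top_left tens_commute by metis

lemma tens_bot_right: "tens a bot = bot"
  using tens_le_iff_le_imp[of a bot bot] by (simp add: bot_unique)

lemma SUP_tens_indicator:
  assumes "\<And>\<chi>. P \<chi> \<Longrightarrow> h \<chi> \<le> h \<psi>" and "P \<psi>"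
  shows "(SUP \<chi>. tens (h \<chi>) (if P \<chi> then top else bot)) = h \<psi>"
proof (rule order.antisym)
  show "(SUP \<chi>. tens (h \<chi>) (if P \<chi> then top else bot)) \<le> h \<psi>"
    using assms(1) by (intro SUP_least) (simp add: tens_top_right tens_bot_right)
  have "h \<psi> = tens (h \<psi>) (if P \<psi> then top else bot)"
    using \<open>P \<psi>\<close> by (simp add: tens_top_right)
  also have "\<dots> \<le> (SUP \<chi>. tens (h \<chi>) (if P \<chi> then top else bot))"
    by (rule SUP_upper) simp
  finally show "h \<psi> \<le> (SUP \<chi>. tens (h \<chi>) (if P \<chi> then top else bot))" .
qed

lemma INF_imp_eqI:
  assumes lower: "\<And>s. s \<in> S \<Longrightarrow> tens (w s) a \<le> R s"
    and witness: "a \<noteq> top \<Longrightarrow> \<exists>s\<in>S. w s = top \<and> R s \<le> a"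
  shows "(INF s\<in>S. imp (w s) (R s)) = a"
proof (rule order.antisym)
  show "a \<le> (INF s\<in>S. imp (w s) (R s))"
    using lower by (intro INF_greatest) (simp add: tens_le_iff_le_imp)
  show "(INF s\<in>S. imp (w s) (R s)) \<le> a"
  proof (cases "a = top")
    case False
    with witness obtain s where "s \<in> S" "w s = top" "R s \<le> a"
      by blast
    then show ?thesis
      by (metis INF_lower2 imp_top_left)
  qed simp
qed

lemma IncI_principal_ideal:
  "f \<in> A_filters \<Longrightarrow> IncI tens f (principal_ideal \<psi>) = f \<psi>"
  unfolding IncI_def principal_ideal_def
  by (rule SUP_tens_indicator) (auto intro: A_filters_mono derives.refl)

lemma IncI_principal_filter:
  "i \<in> A_ideals \<Longrightarrow> IncI tens (principal_filter \<psi>) i = i \<psi>"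
  unfolding IncI_def principal_filter_def tens_commute[of "if _ then _ else _"]
  by (rule SUP_tens_indicator) (auto intro: A_ideals_antimono derives.refl)

lemma RBox_principal_ideal:
  "f \<in> A_filters \<Longrightarrow> RBox tens f (principal_ideal \<psi>) = f (FBox \<psi>)"
  unfolding RBox_def principal_ideal_def
  by (rule SUP_tens_indicator) (auto intro: A_filters_mono derives.refl derives.boxMono)

lemma RDia_principal_filter:
  "i \<in> A_ideals \<Longrightarrow> RDia tens i (principal_filter \<psi>) = i (FDia \<psi>)"
  unfolding RDia_def principal_filter_def tens_commute[of "if _ then _ else _"]
  by (rule SUP_tens_indicator) (auto intro: A_ideals_antimono derives.refl derives.diaMono)

lemma down_eq_filter_eval:
  fixes \<psi> :: "'v fm"
  assumes u: "\<And>i. i \<in> A_ideals \<Longrightarrow> u i = i \<psi>" and f: "f \<in> A_filters"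
  shows "down tens imp u f = f \<psi>"
  unfolding down_def
proof (rule INF_imp_eqI)
  fix i :: "'v fm \<Rightarrow> 'a" assume i: "i \<in> A_ideals"
  have "tens (u i) (f \<psi>) = tens (f \<psi>) (i \<psi>)"
    by (simp only: u[OF i] tens_commute[of "i \<psi>"])
  also have "\<dots> \<le> IncI tens f i"
    unfolding IncI_def by (rule SUP_upper) simp
  finally show "tens (u i) (f \<psi>) \<le> IncI tens f i" .
next
  assume "f \<psi> \<noteq> top"
  then have pi: "principal_ideal \<psi> \<in> A_ideals"
    using A_filters_eq_topI f principal_ideal_in_A_ideals by blast
  show "\<exists>i\<in>A_ideals. u i = top \<and> IncI tens f i \<le> f \<psi>"
  proof (intro bexI conjI)
    show "u (principal_ideal \<psi>) = top"
      using u[OF pi] by (simp add: principal_ideal_def derives.refl)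
  qed (simp_all add: pi f IncI_principal_ideal)
qed

lemma up_eq_ideal_eval:
  fixes \<psi> :: "'v fm"
  assumes g: "\<And>f. f \<in> A_filters \<Longrightarrow> g f = f \<psi>" and i: "i \<in> A_ideals"
  shows "up tens imp g i = i \<psi>"
  unfolding up_def
proof (rule INF_imp_eqI)
  fix f :: "'v fm \<Rightarrow> 'a" assume f: "f \<in> A_filters"
  have "tens (g f) (i \<psi>) = tens (f \<psi>) (i \<psi>)"
    by (simp only: g[OF f])
  also have "\<dots> \<le> IncI tens f i"
    unfolding IncI_def by (rule SUP_upper) simp
  finally show "tens (g f) (i \<psi>) \<le> IncI tens f i" .
next
  assume "i \<psi> \<noteq> top"
  then have pf: "principal_filter \<psi> \<in> A_filters"
    using A_ideals_eq_topI i principal_filter_in_A_filters by blast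
  show "\<exists>f\<in>A_filters. g f = top \<and> IncI tens f i \<le> i \<psi>"
  proof (intro bexI conjI)
    show "g (principal_filter \<psi>) = top"
      using g[OF pf] by (simp add: principal_filter_def derives.refl)
  qed (simp_all add: pf i IncI_principal_filter)
qed

lemma RBox0_eq_filter_eval:
  fixes \<psi> :: "'v fm"
  assumes u: "\<And>i. i \<in> A_ideals \<Longrightarrow> u i = i \<psi>" and f: "f \<in> A_filters"
  shows "RBox0 tens imp u f = f (FBox \<psi>)"
  unfolding RBox0_def
proof (rule INF_imp_eqI)
  fix i :: "'v fm \<Rightarrow> 'a" assume i: "i \<in> A_ideals"
  have "tens (u i) (f (FBox \<psi>)) = tens (f (FBox \<psi>)) (i \<psi>)"
    by (simp only: u[OF i] tens_commute[of "i \<psi>"])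
  also have "\<dots> \<le> RBox tens f i"
    unfolding RBox_def by (rule SUP_upper) simp
  finally show "tens (u i) (f (FBox \<psi>)) \<le> RBox tens f i" .
next
  assume "f (FBox \<psi>) \<noteq> top"
  then have "\<not> derives FTop \<psi>"
    using A_filters_eq_topI f by (meson derives.boxMono derives.boxTop derives.cut)
  then have pi: "principal_ideal \<psi> \<in> A_ideals"
    by (rule principal_ideal_in_A_ideals)
  show "\<exists>i\<in>A_ideals. u i = top \<and> RBox tens f i \<le> f (FBox \<psi>)"
  proof (intro bexI conjI)
    show "u (principal_ideal \<psi>) = top"
      using u[OF pi] by (simp add: principal_ideal_def derives.refl)
  qed (simp_all add: pi f RBox_principal_ideal)
qed

lemma RDia0_eq_ideal_eval:
  fixes \<psi> :: "'v fm"
  assumes g: "\<And>f. f \<in> A_filters \<Longrightarrow> g f = f \<psi>" and i: "i \<in> A_ideals"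
  shows "RDia0 tens imp g i = i (FDia \<psi>)"
  unfolding RDia0_def
proof (rule INF_imp_eqI)
  fix f :: "'v fm \<Rightarrow> 'a" assume f: "f \<in> A_filters"
  have "tens (g f) (i (FDia \<psi>)) = tens (f \<psi>) (i (FDia \<psi>))"
    by (simp only: g[OF f])
  also have "\<dots> \<le> RDia tens i f"
    unfolding RDia_def by (rule SUP_upper) simp
  finally show "tens (g f) (i (FDia \<psi>)) \<le> RDia tens i f" .
next
  assume "i (FDia \<psi>) \<noteq> top"
  then have "\<not> derives \<psi> FBot"
    using A_ideals_eq_topI i by (meson derives.diaMono derives.diaBot derives.cut)
  then have pf: "principal_filter \<psi> \<in> A_filters"
    by (rule principal_filter_in_A_filters)
  show "\<exists>f\<in>A_filters. g f = top \<and> RDia tens i f \<le> i (FDia \<psi>)"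
  proof (intro bexI conjI)
    show "g (principal_filter \<psi>) = top"
      using g[OF pf] by (simp add: principal_filter_def derives.refl)
  qed (simp_all add: pf i RDia_principal_filter)
qed

end

theorem mainTheorem2:
  fixes tens imp :: "'a::complete_lattice \<Rightarrow> 'a \<Rightarrow> 'a" and \<phi> :: "'v fm"
  assumes "cfd_res_lattice tens imp"
  shows "(\<forall>f\<in>A_filters. fst (V tens imp \<phi>) f = f \<phi>) \<and>
         (\<forall>i\<in>A_ideals. snd (V tens imp \<phi>) i = i \<phi>)"
proof (induction \<phi>)
  case FBot
  show ?case
    by (auto simp: A_ideals_FBot intro!: down_eq_filter_eval[OF assms])
next
  case FTop
  show ?case
    by (auto simp: A_filters_FTop intro!: up_eq_ideal_eval[OF assms])
next
  case (Var p)
  show ?case by simp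
next
  case (FAnd \<phi> \<psi>)
  then show ?case
    by (auto simp: Let_def A_filters_FAnd intro!: up_eq_ideal_eval[OF assms])
next
  case (FOr \<phi> \<psi>)
  then show ?case
    by (auto simp: Let_def A_ideals_FOr intro!: down_eq_filter_eval[OF assms])
next
  case (FBox \<phi>)
  then show ?case
    by (auto simp: Let_def RBox0_eq_filter_eval[OF assms] intro!: up_eq_ideal_eval[OF assms])
next
  case (FDia \<phi>)
  then show ?case
    by (auto simp: Let_def RDia0_eq_ideal_eval[OF assms] intro!: down_eq_filter_eval[OF assms])
qed

end
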